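(* Let $\phi\colon\mathbb{N}\to(0,\infty)$ be a non-decreasing function and let $$M(\phi)=\{x\in\mathbb{I}\colon M_n(x)\ge\phi(n)\text{ for infinitely many }n\}.$$ Then $\mathcal{L}(M(\phi))=1$ if $\sum_{n=1}^\infty\frac{1}{\phi(n)}=\infty$, and $\mathcal{L}(M(\phi))=0$ if $\sum_{n=1}^\infty\frac{1}{\phi(n)}<\infty$.
   Context: $\mathcal{L}$ is Lebesgue measure on $(0,1)$, $\mathbb{I}=(0,1)\setminus\mathbb{Q}$. Signed Engel expansion: define $T\colon[0,1)\to[0,1)$ by: for $k\in\mathbb{N}$, $Tx=\lceil 1/x\rceil x-1$ if $x\in(\frac{1}{2k},\frac{1}{2k-1})$; $Tx=1-\lfloor 1/x\rfloor x$ if $x\in(\frac{1}{2k+1},\frac{1}{2k})$; $Tx=0$ if $x\in\{0\}\cup\{1/n\colon n\ge 2\}$. For $x\in(0,1)$, $d_1(x)=\lceil 1/x\rceil$ if $x\in[\frac{1}{2k},\frac{1}{2k-1})$ for some $k\in\mathbb{N}$, and $d_1(x)=\lfloor 1/x\rfloor$ if $x\in[\frac{1}{2k+1},\frac{1}{2k})$ for some $k\in\mathbb{N}$; $d_{n+1}(x)=d_1(T^nx)$. For $x\in\mathbb{I}$, $R_1(x)=d_1(x)$, $R_n(x)=d_n(x)/d_{n-1}(x)$ for $n\ge2$, and $M_n(x)=\max\{R_k(x)\colon 1\le k\le n\}$. *)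

theory Defs
  imports "HOL-Analysis.Analysis"
begin

definition SE_T :: "real \<Rightarrow> real" where
  "SE_T x =
     (if \<exists>k::nat. k \<ge> 1 \<and> 1 / real (2*k) < x \<and> x < 1 / real (2*k - 1)
      then real_of_int (ceiling (1/x)) * x - 1
      else if \<exists>k::nat. k \<ge> 1 \<and> 1 / real (2*k + 1) < x \<and> x < 1 / real (2*k)
      then 1 - real_of_int (floor (1/x)) * x
      else 0)"

definition SE_d1 :: "real \<Rightarrow> int" where
  "SE_d1 x =
     (if \<exists>k::nat. k \<ge> 1 \<and> 1 / real (2*k) \<le> x \<and> x < 1 / real (2*k - 1)
      then ceiling (1/x)
      else floor (1/x))"

definition SE_d :: "nat \<Rightarrow> real \<Rightarrow> int" where
  "SE_d n x = SE_d1 ((SE_T ^^ (n - 1)) x)"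

definition SE_R :: "nat \<Rightarrow> real \<Rightarrow> real" where
  "SE_R n x = (if n = 1 then real_of_int (SE_d 1 x)
               else real_of_int (SE_d n x) / real_of_int (SE_d (n - 1) x))"

definition SE_M :: "nat \<Rightarrow> real \<Rightarrow> real" where
  "SE_M n x = Max ((\<lambda>k. SE_R k x) ` {1..n})"

definition M_set :: "(nat \<Rightarrow> real) \<Rightarrow> real set" where
  "M_set \<phi> = {x \<in> {0<..<1} - \<rat>. infinite {n. n \<ge> 1 \<and> SE_M n x \<ge> \<phi> n}}"

end

theory Submission
  imports Defs
begin

text \<open>
  An irrational \<open>y \<in> (0,1)\<close> has first digit \<open>2k\<close> exactly when \<open>1/y \<in> (2k - 1, 2k + 1)\<close>,
  and there \<open>T y = \<bar>2k y - 1\<bar>\<close>: the two halves of this branch are mapped affinely, with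
  slope \<open>2k\<close>, onto \<open>(0, 1/(2k - 1))\<close> and \<open>(0, 1/(2k + 1))\<close>, the sets where the next digit is
  at least \<open>2k\<close> resp. \<open>2k + 2\<close>. Hence a digit-indexed family of sets that has relative
  density at most \<open>\<rho>\<close> in these two intervals still has relative density at most \<open>\<rho>\<close> after
  one more application of \<open>T\<close>. On such an interval the next digit exceeds \<open>t\<close> times the
  current one with relative probability between \<open>1/(3 max 1 t)\<close> and \<open>3/t\<close>, so iterating
  gives \<open>\<L>(R\<^sub>n \<ge> t) \<le> 3/t\<close> and
  \<open>\<L>(R\<^sub>i < \<phi>(i) for r < i \<le> L) \<le> \<Prod>(1 - 1/(3 max 1 \<phi>(i)))\<close>.

  If \<open>\<Sum> 1/\<phi>(n)\<close> converges, Borel--Cantelli shows that almost surely \<open>R\<^sub>n < \<phi>(n)\<close> eventually;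
  since \<open>\<phi>\<close> is non-decreasing and tends to infinity, \<open>M\<^sub>n \<ge> \<phi>(n)\<close> can then hold only
  finitely often. If it diverges, the product tends to \<open>0\<close>, so almost surely
  \<open>R\<^sub>n \<ge> \<phi>(n)\<close>, and hence \<open>M\<^sub>n \<ge> \<phi>(n)\<close>, infinitely often.
\<close>

section \<open>Series, products and Lebesgue null sets\<close>

lemma prod_one_minus_less:
  fixes a :: "nat \<Rightarrow> real"
  assumes a0: "\<And>i. 0 \<le> a i" and a1: "\<And>i. a i \<le> 1" and diverges: "\<not> summable a" and e: "0 < e"
  shows "\<exists>L. (\<Prod>i\<in>{r..<L}. 1 - a i) < e"
proof (rule ccontr)
  assume "\<not> ?thesis"
  then have ge: "e \<le> (\<Prod>i\<in>{r..<L}. 1 - a i)" for L by (simp add: not_less)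
  have exp_bound: "1 - a i \<le> exp (- a i)" for i using exp_ge_add_one_self[of "- a i"] by simp
  have tail: "(\<Sum>i\<in>{r..<L}. a i) \<le> - ln e" for L
  proof -
    have "e \<le> (\<Prod>i\<in>{r..<L}. 1 - a i)" by (rule ge)
    also have "\<dots> \<le> (\<Prod>i\<in>{r..<L}. exp (- a i))"
      using a1 exp_bound by (intro prod_mono) (simp add: algebra_simps)
    also have "\<dots> = exp (- (\<Sum>i\<in>{r..<L}. a i))" by (simp add: exp_sum[symmetric] sum_negf)
    finally have "ln e \<le> ln (exp (- (\<Sum>i\<in>{r..<L}. a i)))" using e by (subst ln_le_cancel_iff) auto
    then show ?thesis by simp
  qed
  have "(\<Sum>i<L. a i) \<le> (\<Sum>i<r. a i) - ln e" for L
  proof -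
    have "(\<Sum>i<L. a i) \<le> (\<Sum>i\<in>{..<r} \<union> {r..<L}. a i)" using a0 by (intro sum_mono2) auto
    also have "\<dots> = (\<Sum>i<r. a i) + (\<Sum>i\<in>{r..<L}. a i)" by (rule sum.union_disjoint) auto
    also have "\<dots> \<le> (\<Sum>i<r. a i) - ln e" using tail[of L] by simp
    finally show ?thesis .
  qed
  then have "summable a" using a0 by (intro summableI_nonneg_bounded)
  with diverges show False by contradiction
qed

lemma not_summable_inverse_max_1:
  fixes f :: "nat \<Rightarrow> real"
  assumes "\<not> summable (\<lambda>n. 1 / f n)"
  shows "\<not> summable (\<lambda>n. 1 / max 1 (f n))"
proof
  assume "summable (\<lambda>n. 1 / max 1 (f n))"
  moreover from this have "(\<lambda>n. 1 / max 1 (f n)) \<longlonglongrightarrow> 0" by (rule summable_LIMSEQ_zero)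
  then have "\<forall>\<^sub>F n in sequentially. 1 / max 1 (f n) < 1" by (rule order_tendstoD) simp
  then have "\<forall>\<^sub>F n in sequentially. 1 / max 1 (f n) = 1 / f n"
    by (rule eventually_mono) (auto simp: max_def split: if_splits)
  then have "summable (\<lambda>n. 1 / max 1 (f n)) = summable (\<lambda>n. 1 / f n)" by (rule summable_cong)
  ultimately have "summable (\<lambda>n. 1 / f n)" by simp
  with assms show False by contradiction
qed

lemma filterlim_at_top_if_summable_inverse:
  fixes f :: "nat \<Rightarrow> real"
  assumes "\<And>n. 0 < f n" "summable (\<lambda>n. 1 / f n)"
  shows "filterlim f at_top sequentially"
proof -
  have "(\<lambda>n. 1 / f n) \<longlonglongrightarrow> 0" by (rule summable_LIMSEQ_zero[OF assms(2)])
  then have "filterlim (\<lambda>n. inverse (1 / f n)) at_top sequentially"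
    using assms(1) by (intro filterlim_inverse_at_top) auto
  then show ?thesis by simp
qed

lemma finite_running_max_exceedances:
  fixes R \<phi> :: "nat \<Rightarrow> real"
  assumes mono: "\<And>m n. 1 \<le> m \<Longrightarrow> m \<le> n \<Longrightarrow> \<phi> m \<le> \<phi> n"
    and lim: "filterlim \<phi> at_top sequentially"
    and ev: "\<forall>\<^sub>F n in sequentially. R n < \<phi> n"
  shows "finite {n. 1 \<le> n \<and> \<phi> n \<le> Max (R ` {1..n})}"
proof -
  obtain N where N: "\<And>n. N \<le> n \<Longrightarrow> R n < \<phi> n" using ev unfolding eventually_sequentially by blast
  define B where "B = Max (R ` {1..N})"
  have "\<forall>\<^sub>F n in sequentially. B < \<phi> n" using lim by (simp add: filterlim_at_top_dense)
  then obtain N' where N': "\<And>n. N' \<le> n \<Longrightarrow> B < \<phi> n" unfolding eventually_sequentially by blast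
  have "n < max N N'" if n: "1 \<le> n" "\<phi> n \<le> Max (R ` {1..n})" for n
  proof (rule ccontr)
    assume "\<not> n < max N N'"
    then have nN: "N \<le> n" "N' \<le> n" by auto
    have "Max (R ` {1..n}) \<in> R ` {1..n}" using n(1) by (intro Max_in) auto
    then obtain k where k: "1 \<le> k" "k \<le> n" "Max (R ` {1..n}) = R k" by auto
    show False
    proof (cases "N \<le> k")
      case True
      then have "R k < \<phi> k" by (rule N)
      also have "\<phi> k \<le> \<phi> n" using k by (intro mono)
      finally show False using n(2) k(3) by simp
    next
      case False
      then have "R k \<le> B" using k(1) unfolding B_def by (intro Max_ge) auto
      also have "B < \<phi> n" by (rule N'[OF nN(2)])
      finally show False using n(2) k(3) by simp
    qed
  qed
  then have "{n. 1 \<le> n \<and> \<phi> n \<le> Max (R ` {1..n})} \<subseteq> {..<max N N'}" by auto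
  then show ?thesis by (rule finite_subset) simp
qed

lemma null_sets_lebesgue_Rats: "(\<rat> :: real set) \<in> null_sets lebesgue"
  using countable_imp_null_set_lborel[OF countable_rat] by (rule null_sets_completionI)

lemma sets_lebesgue_Diff_Rats: "A \<in> sets lebesgue \<Longrightarrow> A - \<rat> \<in> sets lebesgue" for A :: "real set"
  by (metis null_sets_lebesgue_Rats null_setsD2 sets.Diff)

lemma emeasure_Diff_Rats: "A \<in> sets lebesgue \<Longrightarrow> emeasure lebesgue (A - \<rat>) = emeasure lebesgue (A :: real set)"
  by (rule emeasure_Diff_null_set[OF null_sets_lebesgue_Rats])

lemma lebesgue_affine_preimage:
  fixes b c :: real
  assumes c: "c \<noteq> 0" and A: "A \<in> sets lebesgue"
  shows "{y. b + c * y \<in> A} \<in> sets lebesgue"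
    and "emeasure lebesgue {y. b + c * y \<in> A} = ennreal (1 / \<bar>c\<bar>) * emeasure lebesgue A"
proof -
  have "(\<lambda>y. b + c * y) \<in> lebesgue \<rightarrow>\<^sub>M lebesgue"
    using lebesgue_affine_measurable[where c="\<lambda>_::real. c" and t=b] c by simp
  moreover have "{y. b + c * y \<in> A} = (\<lambda>y. b + c * y) -` A \<inter> space lebesgue" by auto
  ultimately show "{y. b + c * y \<in> A} \<in> sets lebesgue"
    using A by (metis measurable_sets)
  have image: "{y. b + c * y \<in> A} = (\<lambda>x. (1 / c) *\<^sub>R x + (- b / c)) ` A"
  proof safe
    fix y assume "b + c * y \<in> A"
    then show "y \<in> (\<lambda>x. (1 / c) *\<^sub>R x + (- b / c)) ` A"
      by (intro image_eqI[where x="b + c * y"]) (use c in \<open>auto simp: field_simps\<close>)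
  next
    fix x assume "x \<in> A"
    then show "b + c * ((1 / c) *\<^sub>R x + (- b / c)) \<in> A" using c by (simp add: field_simps)
  qed
  show "emeasure lebesgue {y. b + c * y \<in> A} = ennreal (1 / \<bar>c\<bar>) * emeasure lebesgue A"
    unfolding image emeasure_lebesgue_affine by simp
qed

section \<open>Branches of the signed Engel map\<close>

(* For irrational y: y \<in> SE_branch k iff d\<^sub>1(y) = 2k, and y \<in> SE_ge_interval j iff d\<^sub>1(y) \<ge> 2j. *)
definition SE_branch :: "nat \<Rightarrow> real set" where
  "SE_branch k = {1 / (2 * real k + 1)<..<1 / (2 * real k - 1)}"

definition SE_ge_interval :: "nat \<Rightarrow> real set" where
  "SE_ge_interval j = {0<..<1 / (2 * real j - 1)}"

lemma SE_branch_iff: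
  assumes "1 \<le> k" "0 < y"
  shows "y \<in> SE_branch k \<longleftrightarrow> 2 * real k - 1 < 1 / y \<and> 1 / y < 2 * real k + 1"
proof -
  have "0 < 2 * real k - 1" using assms(1) by simp
  then show ?thesis using assms(2) by (auto simp: SE_branch_def field_simps)
qed

lemma SE_ge_interval_iff:
  assumes "1 \<le> j" "0 < y"
  shows "y \<in> SE_ge_interval j \<longleftrightarrow> 2 * real j - 1 < 1 / y"
proof -
  have "0 < 2 * real j - 1" using assms(1) by simp
  then show ?thesis using assms(2) by (auto simp: SE_ge_interval_def field_simps)
qed

lemma SE_ge_interval_antimono:
  assumes "1 \<le> j" "j \<le> m"
  shows "SE_ge_interval m \<subseteq> SE_ge_interval j"
proof -
  have "1 / (2 * real m - 1) \<le> 1 / (2 * real j - 1)"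
    using assms by (intro divide_left_mono) auto
  then show ?thesis by (auto simp: SE_ge_interval_def)
qed

lemma SE_ge_interval_1: "SE_ge_interval 1 = {0<..<1}"
  by (simp add: SE_ge_interval_def)

lemma SE_ge_interval_subset:
  assumes "1 \<le> j"
  shows "SE_ge_interval j \<subseteq> {0<..<1}"
  using SE_ge_interval_antimono[OF order_refl assms] unfolding SE_ge_interval_1 .

lemma SE_branch_0: "SE_branch 0 = {}"
  by (simp add: SE_branch_def)

lemma SE_branch_subset:
  assumes "1 \<le> k"
  shows "SE_branch k \<subseteq> SE_ge_interval k"
proof
  fix y assume "y \<in> SE_branch k"
  then have "1 / (2 * real k + 1) < y" "y < 1 / (2 * real k - 1)" by (simp_all add: SE_branch_def)
  moreover have "0 < 1 / (2 * real k + 1)" by simp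
  ultimately have "0 < y" by linarith
  with \<open>y < 1 / (2 * real k - 1)\<close> show "y \<in> SE_ge_interval k" by (simp add: SE_ge_interval_def)
qed

lemma SE_branch_subset_unit: "SE_branch k \<subseteq> {0<..<1}"
  using SE_branch_subset[of k] SE_ge_interval_subset[of k] by (cases "k = 0") (auto simp: SE_branch_0)

lemma SE_branch_exists:
  assumes "y \<in> {0<..<1} - \<rat>"
  obtains k where "1 \<le> k" "y \<in> SE_branch k"
proof -
  define u where "u = 1 / y"
  have y: "0 < y" "y < 1" "y \<notin> \<rat>" using assms by auto
  have u1: "1 < u" using y by (simp add: u_def)
  have u_irr: "u \<notin> \<rat>"
  proof
    assume "u \<in> \<rat>"
    then have "1 / u \<in> \<rat>" by simp
    with y(3) show False by (simp add: u_def)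
  qed
  define k where "k = nat \<lfloor>(u + 1) / 2\<rfloor>"
  have k1: "1 \<le> k" using u1 by (simp add: k_def le_nat_iff le_floor_iff)
  have "0 \<le> \<lfloor>(u + 1) / 2\<rfloor>" using u1 by simp
  then have "real k = of_int \<lfloor>(u + 1) / 2\<rfloor>" by (simp add: k_def)
  then have k_le: "real k \<le> (u + 1) / 2" and k_gt: "(u + 1) / 2 < real k + 1"
    by linarith+
  have "(u + 1) / 2 \<noteq> real k"
  proof
    assume "(u + 1) / 2 = real k"
    then have "u = 2 * real k - 1" by simp
    with u_irr show False by simp
  qed
  with k_le have "real k < (u + 1) / 2" by (auto simp: less_le)
  with k_gt have "2 * real k - 1 < u \<and> u < 2 * real k + 1" by (simp add: field_simps)
  then have "y \<in> SE_branch k" using SE_branch_iff[OF k1 y(1)] by (simp add: u_def)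
  with k1 show ?thesis by (rule that)
qed

lemma SE_branch_cover:
  assumes "X \<subseteq> {0<..<1} - \<rat>"
  shows "X = (\<Union>k. X \<inter> SE_branch k)"
proof
  show "X \<subseteq> (\<Union>k. X \<inter> SE_branch k)"
  proof
    fix y assume y: "y \<in> X"
    with assms have "y \<in> {0<..<1} - \<rat>" by blast
    then obtain k where "y \<in> SE_branch k" by (rule SE_branch_exists)
    with y show "y \<in> (\<Union>k. X \<inter> SE_branch k)" by blast
  qed
qed blast

lemma disjoint_family_SE_branch: "disjoint_family SE_branch"
  unfolding disjoint_family_on_def
proof (intro ballI impI)
  fix m n :: nat assume "m \<noteq> n"
  show "SE_branch m \<inter> SE_branch n = {}"
  proof (rule ccontr)
    assume "SE_branch m \<inter> SE_branch n \<noteq> {}"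
    then obtain y where y: "y \<in> SE_branch m" "y \<in> SE_branch n" by blast
    then have "m \<noteq> 0" "n \<noteq> 0" by (metis SE_branch_0 empty_iff)+
    moreover have "y \<in> {0<..<1}" using y(1) SE_branch_subset_unit by blast
    then have "0 < y" by simp
    ultimately have "2 * real m - 1 < 1 / y" "1 / y < 2 * real m + 1"
      "2 * real n - 1 < 1 / y" "1 / y < 2 * real n + 1"
      using y SE_branch_iff[of m y] SE_branch_iff[of n y] by auto
    then have "real m < real n + 1" "real n < real m + 1" by linarith+
    then have "m < Suc n" "n < Suc m" by (simp_all only: of_nat_less_iff flip: of_nat_Suc)
    with \<open>m \<noteq> n\<close> show False by linarith
  qed
qed

lemma SE_branch_halves:
  assumes "1 \<le> k" "y \<notin> \<rat>"
  shows "y \<in> SE_branch k \<longleftrightarrow>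
    (1 / (2 * real k) < y \<and> y < 1 / (2 * real k - 1)) \<or> (1 / (2 * real k + 1) < y \<and> y < 1 / (2 * real k))"
proof -
  have "1 / (2 * real k + 1) < 1 / (2 * real k)" "1 / (2 * real k) < 1 / (2 * real k - 1)"
    using assms(1) by (auto intro!: divide_strict_left_mono)
  moreover have "y \<noteq> 1 / (2 * real k)" using assms(2) by auto
  ultimately show ?thesis by (auto simp: SE_branch_def linorder_neq_iff)
qed

lemma SE_right_half:
  assumes k: "1 \<le> k" and y: "1 / (2 * real k) < y" "y < 1 / (2 * real k - 1)"
  shows "SE_d1 y = 2 * int k \<and> SE_T y = 2 * real k * y - 1"
proof -
  have k2: "real (2 * k - 1) = 2 * real k - 1" "0 < 2 * real k - 1" using k by (simp_all add: of_nat_diff)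
  have "0 < 1 / (2 * real k)" using k by simp
  with y(1) have y0: "0 < y" by linarith
  have u: "2 * real k - 1 < 1 / y" "1 / y < 2 * real k" using y y0 k k2(2) by (simp_all add: field_simps)
  have right: "1 / real (2 * k) < y \<and> y < 1 / real (2 * k - 1)" using y k2(1) by simp
  then have "\<exists>k'\<ge>1. 1 / real (2 * k') < y \<and> y < 1 / real (2 * k' - 1)"
    using k by blast
  moreover have "\<exists>k'\<ge>1. 1 / real (2 * k') \<le> y \<and> y < 1 / real (2 * k' - 1)"
    using right k less_imp_le by blast
  moreover have "\<lceil>1 / y\<rceil> = 2 * int k" using u by (intro ceiling_unique) auto
  ultimately show ?thesis by (simp add: SE_d1_def SE_T_def)
qed

lemma SE_left_half:
  assumes k: "1 \<le> k" and y: "1 / (2 * real k + 1) < y" "y < 1 / (2 * real k)"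
  shows "SE_d1 y = 2 * int k \<and> SE_T y = 1 - 2 * real k * y"
proof -
  have "0 < 1 / (2 * real k + 1)" by simp
  with y(1) have y0: "0 < y" by linarith
  have u: "2 * real k < 1 / y" "1 / y < 2 * real k + 1" using y y0 k by (simp_all add: field_simps)
  have no_right: "\<not> (\<exists>k'\<ge>1. 1 / real (2 * k') \<le> y \<and> y < 1 / real (2 * k' - 1))"
  proof
    assume "\<exists>k'\<ge>1. 1 / real (2 * k') \<le> y \<and> y < 1 / real (2 * k' - 1)"
    then obtain k' where k': "1 \<le> k'" "1 / real (2 * k') \<le> y" "y < 1 / real (2 * k' - 1)"
      by blast
    have "real (2 * k' - 1) = 2 * real k' - 1" "0 < 2 * real k' - 1"
      using k'(1) by (simp_all add: of_nat_diff)
    with k' y0 have "2 * real k' - 1 < 1 / y" "1 / y \<le> 2 * real k'" by (simp_all add: field_simps)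
    with u have "real k < real k'" "real k' < real (Suc k)" by simp_all
    then show False by simp
  qed
  then have no_right': "\<not> (\<exists>k'\<ge>1. 1 / real (2 * k') < y \<and> y < 1 / real (2 * k' - 1))"
    by (meson less_imp_le)
  have left: "\<exists>k'\<ge>1. 1 / real (2 * k' + 1) < y \<and> y < 1 / real (2 * k')"
    using k y by (intro exI[of _ k]) (simp add: algebra_simps)
  have "\<lfloor>1 / y\<rfloor> = 2 * int k" using u by (intro floor_unique) auto
  then show ?thesis
    unfolding SE_d1_def SE_T_def if_not_P[OF no_right] if_not_P[OF no_right'] if_P[OF left] by simp
qed

lemma SE_branch_digit:
  assumes "1 \<le> k" "y \<in> SE_branch k" "y \<notin> \<rat>"
  shows "SE_d1 y = 2 * int k"
  using SE_branch_halves[OF assms(1,3)] assms(2) SE_right_half[OF assms(1)] SE_left_half[OF assms(1)]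
  by auto

lemma SE_right_half_iff:
  assumes "1 \<le> k"
  shows "2 * real k * y - 1 \<in> SE_ge_interval k \<longleftrightarrow> 1 / (2 * real k) < y \<and> y < 1 / (2 * real k - 1)"
proof -
  have k: "1 \<le> real k" and p: "0 < 2 * real k - 1" using assms by simp_all
  have "0 < 2 * real k * y - 1 \<longleftrightarrow> 1 / (2 * real k) < y" using k by (simp add: field_simps)
  moreover have "2 * real k * y - 1 < 1 / (2 * real k - 1) \<longleftrightarrow> y < 1 / (2 * real k - 1)"
  proof -
    have "2 * real k * y - 1 < 1 / (2 * real k - 1) \<longleftrightarrow> (2 * real k * y - 1) * (2 * real k - 1) < 1"
      using p by (simp add: less_divide_eq)
    also have "\<dots> \<longleftrightarrow> 2 * real k * (y * (2 * real k - 1)) < 2 * real k * 1"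
      by (simp add: algebra_simps)
    also have "\<dots> \<longleftrightarrow> y * (2 * real k - 1) < 1" using k by simp
    also have "\<dots> \<longleftrightarrow> y < 1 / (2 * real k - 1)" using p by (simp add: less_divide_eq)
    finally show ?thesis .
  qed
  ultimately show ?thesis by (auto simp: SE_ge_interval_def)
qed

lemma SE_left_half_iff:
  assumes "1 \<le> k"
  shows "1 - 2 * real k * y \<in> SE_ge_interval (Suc k) \<longleftrightarrow> 1 / (2 * real k + 1) < y \<and> y < 1 / (2 * real k)"
proof -
  have k: "1 \<le> real k" and p: "0 < 2 * real k + 1" using assms by simp_all
  have Suc_k: "2 * real (Suc k) - 1 = 2 * real k + 1" by simp
  have "0 < 1 - 2 * real k * y \<longleftrightarrow> y < 1 / (2 * real k)" using k by (simp add: field_simps)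
  moreover have "1 - 2 * real k * y < 1 / (2 * real k + 1) \<longleftrightarrow> 1 / (2 * real k + 1) < y"
  proof -
    have "1 - 2 * real k * y < 1 / (2 * real k + 1) \<longleftrightarrow> (1 - 2 * real k * y) * (2 * real k + 1) < 1"
      using p by (simp add: less_divide_eq)
    also have "\<dots> \<longleftrightarrow> 2 * real k * 1 < 2 * real k * (y * (2 * real k + 1))"
      by (simp add: algebra_simps)
    also have "\<dots> \<longleftrightarrow> 1 < y * (2 * real k + 1)" using k by simp
    also have "\<dots> \<longleftrightarrow> 1 / (2 * real k + 1) < y" using p by (simp add: divide_less_eq)
    finally show ?thesis .
  qed
  ultimately show ?thesis unfolding SE_ge_interval_def Suc_k by auto
qed

lemma SE_T_irrational:
  assumes y: "y \<in> {0<..<1} - \<rat>"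
  shows "SE_T y \<in> {0<..<1} - \<rat>"
proof -
  obtain k where k: "1 \<le> k" "y \<in> SE_branch k" using SE_branch_exists[OF y] .
  from k(2) SE_branch_halves[OF k(1)] y
  consider (right) "1 / (2 * real k) < y" "y < 1 / (2 * real k - 1)"
    | (left) "1 / (2 * real k + 1) < y" "y < 1 / (2 * real k)" by auto
  then have "SE_T y \<in> SE_ge_interval k \<union> SE_ge_interval (Suc k) \<and>
      (y = (SE_T y + 1) / (2 * real k) \<or> y = (1 - SE_T y) / (2 * real k))"
  proof cases
    case right
    then show ?thesis using SE_right_half[OF k(1)] SE_right_half_iff[OF k(1)] k(1) by simp
  next
    case left
    then show ?thesis using SE_left_half[OF k(1)] SE_left_half_iff[OF k(1)] k(1) by simp
  qed
  then have "SE_T y \<in> {0<..<1}" and y_eq: "y = (SE_T y + 1) / (2 * real k) \<or> y = (1 - SE_T y) / (2 * real k)"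
    using SE_ge_interval_subset[of k] SE_ge_interval_subset[of "Suc k"] k(1) by auto
  moreover have "SE_T y \<notin> \<rat>"
  proof
    assume "SE_T y \<in> \<rat>"
    then have "(SE_T y + 1) / (2 * real k) \<in> \<rat>" "(1 - SE_T y) / (2 * real k) \<in> \<rat>" by simp_all
    with y_eq y show False by auto
  qed
  ultimately show ?thesis by simp
qed

lemma SE_d1_ge_iff:
  assumes y: "y \<in> {0<..<1} - \<rat>" and m: "1 \<le> m"
  shows "2 * int m \<le> SE_d1 y \<longleftrightarrow> y \<in> SE_ge_interval m"
proof -
  obtain k where k: "1 \<le> k" "y \<in> SE_branch k" using SE_branch_exists[OF y] .
  have y0: "0 < y" using y by simp
  have u: "2 * real k - 1 < 1 / y" "1 / y < 2 * real k + 1"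
    using SE_branch_iff[OF k(1) y0] k(2) by simp_all
  have "m \<le> k \<longleftrightarrow> 2 * real m - 1 < 1 / y"
  proof
    assume "m \<le> k"
    then have "real m \<le> real k" by simp
    with u(1) show "2 * real m - 1 < 1 / y" by linarith
  next
    assume "2 * real m - 1 < 1 / y"
    with u(2) have "real m < real (Suc k)" by simp
    then show "m \<le> k" by (simp only: of_nat_less_iff less_Suc_eq_le)
  qed
  moreover have "SE_d1 y = 2 * int k" using SE_branch_digit[OF k] y by simp
  ultimately show ?thesis using SE_ge_interval_iff[OF m y0] by simp
qed

lemma SE_ge_interval_eq:
  assumes "1 \<le> j"
  shows "SE_ge_interval j - \<rat> = {y \<in> {0<..<1} - \<rat>. 2 * int j \<le> SE_d1 y}"
proof -
  have "y \<in> SE_ge_interval j - \<rat> \<longleftrightarrow> y \<in> {0<..<1} - \<rat> \<and> 2 * int j \<le> SE_d1 y" for y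
  proof (cases "y \<in> {0<..<1} - \<rat>")
    case True
    then show ?thesis using SE_d1_ge_iff[OF True assms] by simp
  next
    case False
    then show ?thesis using SE_ge_interval_subset[OF assms] by blast
  qed
  then show ?thesis by blast
qed

lemma sets_SE_ge_interval [simp]: "SE_ge_interval j \<in> sets lebesgue"
  by (simp add: SE_ge_interval_def)

lemma emeasure_SE_ge_interval:
  assumes "1 \<le> j"
  shows "emeasure lebesgue (SE_ge_interval j) = ennreal (1 / (2 * real j - 1))"
  using assms by (simp add: SE_ge_interval_def)

lemma emeasure_SE_branch:
  assumes "1 \<le> k"
  shows "emeasure lebesgue (SE_branch k - \<rat>) = ennreal (1 / (2 * real k)) *
    (emeasure lebesgue (SE_ge_interval k) + emeasure lebesgue (SE_ge_interval (Suc k)))"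
proof -
  have p: "0 < 2 * real k - 1" using assms by simp
  have "1 \<le> Suc k" by simp
  from emeasure_SE_ge_interval[OF this]
  have Suc_k: "emeasure lebesgue (SE_ge_interval (Suc k)) = ennreal (1 / (2 * real k + 1))"
    by (simp add: algebra_simps)
  have "1 / (2 * real k + 1) \<le> 1 / (2 * real k - 1)" using p by (intro divide_left_mono) auto
  then have "emeasure lebesgue (SE_branch k - \<rat>) = ennreal (1 / (2 * real k - 1) - 1 / (2 * real k + 1))"
    by (simp add: SE_branch_def emeasure_Diff_Rats)
  also have "1 / (2 * real k - 1) - 1 / (2 * real k + 1)
      = 1 / (2 * real k) * (1 / (2 * real k - 1) + 1 / (2 * real k + 1))"
    using p by (simp add: field_simps)
  also have "ennreal \<dots> = ennreal (1 / (2 * real k)) * (ennreal (1 / (2 * real k - 1)) + ennreal (1 / (2 * real k + 1)))"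
    using p by (simp add: ennreal_mult[symmetric] ennreal_plus[symmetric] del: ennreal_plus)
  also have "\<dots> = ennreal (1 / (2 * real k)) *
      (emeasure lebesgue (SE_ge_interval k) + emeasure lebesgue (SE_ge_interval (Suc k)))"
    by (simp only: emeasure_SE_ge_interval[OF assms] Suc_k)
  finally show ?thesis .
qed

section \<open>Pulling back digit-indexed families under the map\<close>

(* The affine maps are written as b + c * y, the form used by lebesgue_affine_preimage. *)
lemma SE_branch_preimage_eq:
  assumes "1 \<le> k"
  shows "{y \<in> SE_branch k - \<rat>. SE_T y \<in> S} =
    ({y. - 1 + 2 * real k * y \<in> S \<inter> SE_ge_interval k} \<union>
     {y. 1 + - 2 * real k * y \<in> S \<inter> SE_ge_interval (Suc k)}) - \<rat>"
proof -
  have "y \<in> SE_branch k \<and> SE_T y \<in> S \<longleftrightarrow>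
      2 * real k * y - 1 \<in> S \<inter> SE_ge_interval k \<or> 1 - 2 * real k * y \<in> S \<inter> SE_ge_interval (Suc k)"
    if "y \<notin> \<rat>" for y
    using SE_branch_halves[OF assms that] SE_right_half[OF assms] SE_left_half[OF assms]
      SE_right_half_iff[OF assms] SE_left_half_iff[OF assms]
    by auto
  then show ?thesis by auto
qed

lemma SE_branch_preimage:
  assumes k: "1 \<le> k" and S: "S \<in> sets lebesgue"
  shows "{y \<in> SE_branch k - \<rat>. SE_T y \<in> S} \<in> sets lebesgue"
    and "emeasure lebesgue {y \<in> SE_branch k - \<rat>. SE_T y \<in> S} \<le> ennreal (1 / (2 * real k)) *
      (emeasure lebesgue (S \<inter> SE_ge_interval k) + emeasure lebesgue (S \<inter> SE_ge_interval (Suc k)))"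
proof -
  define R where "R = {y. - 1 + 2 * real k * y \<in> S \<inter> SE_ge_interval k}"
  define L where "L = {y. 1 + - 2 * real k * y \<in> S \<inter> SE_ge_interval (Suc k)}"
  have c: "2 * real k \<noteq> 0" "- 2 * real k \<noteq> 0" using k by auto
  have SI: "S \<inter> SE_ge_interval k \<in> sets lebesgue" "S \<inter> SE_ge_interval (Suc k) \<in> sets lebesgue"
    using S by auto
  have abs_c: "\<bar>2 * real k\<bar> = 2 * real k" "\<bar>- 2 * real k\<bar> = 2 * real k" by simp_all
  have R: "R \<in> sets lebesgue"
    "emeasure lebesgue R = ennreal (1 / (2 * real k)) * emeasure lebesgue (S \<inter> SE_ge_interval k)"
    unfolding R_def using lebesgue_affine_preimage[OF c(1) SI(1)] unfolding abs_c by blast+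
  have L: "L \<in> sets lebesgue"
    "emeasure lebesgue L = ennreal (1 / (2 * real k)) * emeasure lebesgue (S \<inter> SE_ge_interval (Suc k))"
    unfolding L_def using lebesgue_affine_preimage[OF c(2) SI(2)] unfolding abs_c by blast+
  note eq = SE_branch_preimage_eq[OF k, of S, folded R_def L_def]
  show "{y \<in> SE_branch k - \<rat>. SE_T y \<in> S} \<in> sets lebesgue"
    unfolding eq using R(1) L(1) by (intro sets_lebesgue_Diff_Rats sets.Un)
  have "emeasure lebesgue ((R \<union> L) - \<rat>) = emeasure lebesgue (R \<union> L)"
    using R(1) L(1) by (intro emeasure_Diff_Rats sets.Un)
  also have "\<dots> \<le> emeasure lebesgue R + emeasure lebesgue L"
    by (rule emeasure_subadditive[OF R(1) L(1)])
  also have "\<dots> = ennreal (1 / (2 * real k)) *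
      (emeasure lebesgue (S \<inter> SE_ge_interval k) + emeasure lebesgue (S \<inter> SE_ge_interval (Suc k)))"
    unfolding R(2) L(2) by (simp add: distrib_left)
  finally show "emeasure lebesgue {y \<in> SE_branch k - \<rat>. SE_T y \<in> S} \<le> ennreal (1 / (2 * real k)) *
      (emeasure lebesgue (S \<inter> SE_ge_interval k) + emeasure lebesgue (S \<inter> SE_ge_interval (Suc k)))"
    unfolding eq .
qed

lemma emeasure_SE_branch_preimage_le:
  fixes \<rho> :: ennreal
  assumes k: "1 \<le> k" and B: "B \<in> sets lebesgue"
    and B_le: "\<And>j. j \<in> {k, Suc k} \<Longrightarrow>
      emeasure lebesgue (B \<inter> SE_ge_interval j) \<le> \<rho> * emeasure lebesgue (SE_ge_interval j)"
  shows "emeasure lebesgue {y \<in> SE_branch k - \<rat>. SE_T y \<in> B} \<le> \<rho> * emeasure lebesgue (SE_branch k - \<rat>)"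
proof -
  have "emeasure lebesgue {y \<in> SE_branch k - \<rat>. SE_T y \<in> B} \<le> ennreal (1 / (2 * real k)) *
      (emeasure lebesgue (B \<inter> SE_ge_interval k) + emeasure lebesgue (B \<inter> SE_ge_interval (Suc k)))"
    by (rule SE_branch_preimage(2)[OF k B])
  also have "\<dots> \<le> ennreal (1 / (2 * real k)) *
      (\<rho> * emeasure lebesgue (SE_ge_interval k) + \<rho> * emeasure lebesgue (SE_ge_interval (Suc k)))"
    using B_le by (intro mult_left_mono add_mono) auto
  also have "\<dots> = \<rho> * emeasure lebesgue (SE_branch k - \<rat>)"
    unfolding emeasure_SE_branch[OF k] by (simp add: algebra_simps)
  finally show ?thesis .
qed

lemma SE_pullback_Int_branch:
  assumes "1 \<le> k"
  shows "{y \<in> {0<..<1} - \<rat>. C (SE_d1 y) \<and> SE_T y \<in> B (SE_d1 y)} \<inter> SE_branch k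
    = (if C (2 * int k) then {y \<in> SE_branch k - \<rat>. SE_T y \<in> B (2 * int k)} else {})"
  using SE_branch_digit[OF assms] SE_branch_subset_unit[of k] by auto

(* B p is a condition on the rest of an orbit after the digit p. Only even digits 2k occur, and
   after the digit 2k the image under T lies in SE_ge_interval k or SE_ge_interval (Suc k). *)
definition SE_density_le :: "(int \<Rightarrow> real set) \<Rightarrow> ennreal \<Rightarrow> bool" where
  "SE_density_le B \<rho> \<longleftrightarrow> (\<forall>k\<ge>1. B (2 * int k) \<in> sets lebesgue \<and> (\<forall>j\<in>{k, Suc k}.
     emeasure lebesgue (B (2 * int k) \<inter> SE_ge_interval j) \<le> \<rho> * emeasure lebesgue (SE_ge_interval j)))"

lemma SE_density_leD:
  assumes "SE_density_le B \<rho>" "1 \<le> k"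
  shows "B (2 * int k) \<in> sets lebesgue"
    and "j \<in> {k, Suc k} \<Longrightarrow>
      emeasure lebesgue (B (2 * int k) \<inter> SE_ge_interval j) \<le> \<rho> * emeasure lebesgue (SE_ge_interval j)"
  using assms unfolding SE_density_le_def by blast+

lemma SE_pullback_Int_branch_le:
  fixes B :: "int \<Rightarrow> real set" and C :: "int \<Rightarrow> bool" and \<rho> :: ennreal
  assumes B: "SE_density_le B \<rho>"
  defines "S \<equiv> {y \<in> {0<..<1} - \<rat>. C (SE_d1 y) \<and> SE_T y \<in> B (SE_d1 y)}"
    and "G \<equiv> {y \<in> {0<..<1} - \<rat>. C (SE_d1 y)}"
  shows "S \<inter> SE_branch k \<in> sets lebesgue" "G \<inter> SE_branch k \<in> sets lebesgue"
    "emeasure lebesgue (S \<inter> SE_branch k) \<le> \<rho> * emeasure lebesgue (G \<inter> SE_branch k)"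
proof -
  have "S \<inter> SE_branch k \<in> sets lebesgue \<and> G \<inter> SE_branch k \<in> sets lebesgue \<and>
    emeasure lebesgue (S \<inter> SE_branch k) \<le> \<rho> * emeasure lebesgue (G \<inter> SE_branch k)"
  proof (cases "1 \<le> k \<and> C (2 * int k)")
    case True
    then have k: "1 \<le> k" and c: "C (2 * int k)" by auto
    have Sk: "S \<inter> SE_branch k = {y \<in> SE_branch k - \<rat>. SE_T y \<in> B (2 * int k)}"
      using SE_pullback_Int_branch[OF k] c unfolding S_def by simp
    have Gk: "G \<inter> SE_branch k = SE_branch k - \<rat>"
      using SE_pullback_Int_branch[OF k, of C "\<lambda>_. UNIV"] c by (simp add: G_def set_diff_eq)
    have "{y \<in> SE_branch k - \<rat>. SE_T y \<in> B (2 * int k)} \<in> sets lebesgue"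
      by (rule SE_branch_preimage(1)[OF k SE_density_leD(1)[OF B k]])
    moreover have "SE_branch k - \<rat> \<in> sets lebesgue"
      by (intro sets_lebesgue_Diff_Rats) (simp add: SE_branch_def)
    moreover have "emeasure lebesgue {y \<in> SE_branch k - \<rat>. SE_T y \<in> B (2 * int k)}
        \<le> \<rho> * emeasure lebesgue (SE_branch k - \<rat>)"
      by (rule emeasure_SE_branch_preimage_le[OF k SE_density_leD[OF B k]])
    ultimately show ?thesis unfolding Sk Gk by blast
  next
    case False
    then have "S \<inter> SE_branch k = {}" "G \<inter> SE_branch k = {}"
      using SE_pullback_Int_branch[of k C B] SE_pullback_Int_branch[of k C "\<lambda>_. UNIV"]
      by (cases "k = 0"; auto simp: S_def G_def SE_branch_0)+
    then show ?thesis by simp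
  qed
  then show "S \<inter> SE_branch k \<in> sets lebesgue" "G \<inter> SE_branch k \<in> sets lebesgue"
    "emeasure lebesgue (S \<inter> SE_branch k) \<le> \<rho> * emeasure lebesgue (G \<inter> SE_branch k)"
    by blast+
qed

lemma emeasure_SE_pullback_le:
  fixes B :: "int \<Rightarrow> real set" and C :: "int \<Rightarrow> bool" and \<rho> :: ennreal
  assumes B: "SE_density_le B \<rho>"
  defines "S \<equiv> {y \<in> {0<..<1} - \<rat>. C (SE_d1 y) \<and> SE_T y \<in> B (SE_d1 y)}"
    and "G \<equiv> {y \<in> {0<..<1} - \<rat>. C (SE_d1 y)}"
  shows "S \<in> sets lebesgue" "G \<in> sets lebesgue" "emeasure lebesgue S \<le> \<rho> * emeasure lebesgue G"
proof -
  note pieces = SE_pullback_Int_branch_le[OF B, of C, folded S_def G_def]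
  have S_eq: "S = (\<Union>k. S \<inter> SE_branch k)" by (rule SE_branch_cover) (auto simp: S_def)
  have G_eq: "G = (\<Union>k. G \<inter> SE_branch k)" by (rule SE_branch_cover) (auto simp: G_def)
  show "S \<in> sets lebesgue" by (subst S_eq) (use pieces(1) in blast)
  show "G \<in> sets lebesgue" by (subst G_eq) (use pieces(2) in blast)
  have "disjoint_family (\<lambda>k. G \<inter> SE_branch k)"
    using disjoint_family_SE_branch by (auto simp: disjoint_family_on_def)
  then have G_sum: "(\<Sum>k. emeasure lebesgue (G \<inter> SE_branch k)) = emeasure lebesgue G"
    using pieces(2) by (subst G_eq) (rule suminf_emeasure, auto)
  have "emeasure lebesgue S \<le> (\<Sum>k. emeasure lebesgue (S \<inter> SE_branch k))"
    using pieces(1) by (subst S_eq) (rule emeasure_subadditive_countably, auto)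
  also have "\<dots> \<le> (\<Sum>k. \<rho> * emeasure lebesgue (G \<inter> SE_branch k))"
    by (intro suminf_le pieces(3)) auto
  also have "\<dots> = \<rho> * emeasure lebesgue G"
    unfolding ennreal_suminf_cmult G_sum ..
  finally show "emeasure lebesgue S \<le> \<rho> * emeasure lebesgue G" .
qed

section \<open>Thresholds for the ratio of consecutive digits\<close>

lemma SE_ratio_ge_set:
  assumes k: "1 \<le> k" and j: "1 \<le> j"
  shows "{y \<in> SE_ge_interval j - \<rat>. t \<le> of_int (SE_d1 y) / (2 * real k)}
    = SE_ge_interval (max j (nat \<lceil>t * real k\<rceil>)) - \<rat>"
proof -
  let ?M = "max j (nat \<lceil>t * real k\<rceil>)"
  have M: "1 \<le> ?M" using j by simp
  have "y \<in> SE_ge_interval j \<and> t \<le> of_int (SE_d1 y) / (2 * real k) \<longleftrightarrow> y \<in> SE_ge_interval ?M"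
    if y: "y \<in> {0<..<1} - \<rat>" for y
  proof -
    obtain k' where k': "1 \<le> k'" "y \<in> SE_branch k'" using SE_branch_exists[OF y] .
    have d: "SE_d1 y = 2 * int k'" using SE_branch_digit[OF k'] y by simp
    have "t \<le> of_int (SE_d1 y) / (2 * real k) \<longleftrightarrow> t * real k \<le> real k'"
      using k by (simp add: d field_simps)
    also have "\<dots> \<longleftrightarrow> nat \<lceil>t * real k\<rceil> \<le> k'"
      by (simp add: ceiling_le_iff nat_le_iff)
    finally show ?thesis
      unfolding SE_d1_ge_iff[OF y j, symmetric] SE_d1_ge_iff[OF y M, symmetric] d by simp
  qed
  moreover have "SE_ge_interval i \<subseteq> {0<..<1}" if "1 \<le> i" for i
    using SE_ge_interval_subset[OF that] .
  ultimately show ?thesis using j M by blast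
qed

lemma SE_threshold_index:
  assumes "1 \<le> k" "1 \<le> j" "0 < t"
  defines "M \<equiv> max j (nat \<lceil>t * real k\<rceil>)"
  shows "1 \<le> M" "j \<le> M" "t * real k \<le> real M" "real M \<le> max (real j) (t * real k + 1)"
proof -
  have "0 < t * real k" using assms by simp
  then have M: "real M = max (real j) (of_int \<lceil>t * real k\<rceil>)" by (simp add: M_def of_nat_max)
  show "1 \<le> M" "j \<le> M" using assms(2) by (simp_all add: M_def)
  show "t * real k \<le> real M" by (simp add: M le_max_iff_disj)
  show "real M \<le> max (real j) (t * real k + 1)"
    unfolding M by (intro max.mono order_refl of_int_ceiling_le_add_one)
qed

lemma SE_threshold_upper_bound:
  assumes k: "1 \<le> k" and j: "j \<in> {k, Suc k}" and t: "0 < t"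
    and M: "j \<le> M" "t * real k \<le> real M"
  shows "1 / (2 * real M - 1) \<le> 3 / t * (1 / (2 * real j - 1))"
proof (cases "t \<le> 3")
  case True
  have j1: "1 \<le> j" using k j by auto
  have "1 / (2 * real M - 1) \<le> 1 / (2 * real j - 1)"
    using M(1) j1 by (intro divide_left_mono) auto
  also have "\<dots> = 1 * (1 / (2 * real j - 1))" by simp
  also have "\<dots> \<le> 3 / t * (1 / (2 * real j - 1))"
    using True t j1 by (intro mult_right_mono) auto
  finally show ?thesis .
next
  case False
  have j1: "1 \<le> j" and jk: "real j \<le> real k + 1" using k j by auto
  have "t * (2 * real j - 1) \<le> t * (2 * real k + 1)" using jk t by simp
  also have "\<dots> \<le> 3 * (2 * t * real k - 1)"
    using False k mult_right_mono[of 3 t "4 * real k - 1"] by (simp add: algebra_simps)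
  also have "\<dots> \<le> 3 * (2 * real M - 1)" using M(2) by simp
  finally show ?thesis using M(1) j1 t by (simp add: field_simps)
qed

lemma SE_threshold_lower_bound:
  assumes k: "1 \<le> k" and j: "j \<in> {k, Suc k}" and T: "1 \<le> T" "t \<le> T"
    and M: "1 \<le> M" "j \<le> M" "real M \<le> max (real j) (t * real k + 1)"
  shows "1 / (3 * T * (2 * real j - 1)) \<le> 1 / (2 * real M - 1)"
proof -
  have j1: "1 \<le> j" and jk: "real k \<le> real j" using k j by auto
  have "2 * real j - 1 \<le> 3 * T * (2 * real j - 1)"
    using T j1 mult_right_mono[of 1 "3 * T" "2 * real j - 1"] by simp
  moreover have "2 * (t * real k + 1) - 1 \<le> 3 * T * (2 * real j - 1)"
  proof -
    have "2 * (t * real k + 1) - 1 \<le> 2 * T * real k + 1" using T k by (simp add: mult_right_mono)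
    also have "\<dots> \<le> 3 * T * (2 * real k - 1)"
      using T k mult_mono[of 1 T 1 "4 * real k - 3"] by (simp add: algebra_simps)
    also have "\<dots> \<le> 3 * T * (2 * real j - 1)" using T jk by simp
    finally show ?thesis .
  qed
  ultimately have "2 * real M - 1 \<le> 3 * T * (2 * real j - 1)"
    using M(3) by (simp add: max_def split: if_splits)
  then show ?thesis using M(1) by (intro divide_left_mono) auto
qed

lemma emeasure_SE_ratio_ge_le:
  assumes k: "1 \<le> k" and j: "j \<in> {k, Suc k}" and t: "0 < t"
  shows "emeasure lebesgue {y \<in> SE_ge_interval j - \<rat>. t \<le> of_int (SE_d1 y) / (2 * real k)}
    \<le> ennreal (3 / t) * emeasure lebesgue (SE_ge_interval j)"
proof -
  define M where "M = max j (nat \<lceil>t * real k\<rceil>)"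
  have j1: "1 \<le> j" using k j by auto
  note M = SE_threshold_index[OF k j1 t, folded M_def]
  have "ennreal (1 / (2 * real M - 1)) \<le> ennreal (3 / t * (1 / (2 * real j - 1)))"
    by (rule ennreal_leI, rule SE_threshold_upper_bound[OF k j t M(2,3)])
  also have "\<dots> = ennreal (3 / t) * ennreal (1 / (2 * real j - 1))"
    using t j1 by (intro ennreal_mult) auto
  finally show ?thesis
    unfolding SE_ratio_ge_set[OF k j1] M_def[symmetric] emeasure_Diff_Rats[OF sets_SE_ge_interval]
      emeasure_SE_ge_interval[OF M(1)] emeasure_SE_ge_interval[OF j1] .
qed

lemma emeasure_SE_ratio_less_le:
  assumes k: "1 \<le> k" and j: "j \<in> {k, Suc k}" and t: "0 < t"
  shows "emeasure lebesgue {y \<in> SE_ge_interval j - \<rat>. of_int (SE_d1 y) / (2 * real k) < t}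
    \<le> ennreal (1 - 1 / (3 * max 1 t)) * emeasure lebesgue (SE_ge_interval j)"
proof -
  define M where "M = max j (nat \<lceil>t * real k\<rceil>)"
  define T where "T = max 1 t"
  have j1: "1 \<le> j" using k j by auto
  note M = SE_threshold_index[OF k j1 t, folded M_def]
  have "1 / (3 * T * (2 * real j - 1)) \<le> 1 / (2 * real M - 1)"
    by (rule SE_threshold_lower_bound[OF k j _ _ M(1,2,4)]) (simp_all add: T_def)
  moreover have "(1 - 1 / (3 * T)) * (1 / (2 * real j - 1))
      = 1 / (2 * real j - 1) - 1 / (3 * T * (2 * real j - 1))"
    by (simp add: diff_divide_distrib)
  ultimately have ineq:
    "1 / (2 * real j - 1) - 1 / (2 * real M - 1) \<le> (1 - 1 / (3 * T)) * (1 / (2 * real j - 1))"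
    by linarith
  have eq: "{y \<in> SE_ge_interval j - \<rat>. of_int (SE_d1 y) / (2 * real k) < t}
      = (SE_ge_interval j - \<rat>) - (SE_ge_interval M - \<rat>)"
    unfolding M_def SE_ratio_ge_set[OF k j1, symmetric] by auto
  have "emeasure lebesgue ((SE_ge_interval j - \<rat>) - (SE_ge_interval M - \<rat>))
      = emeasure lebesgue (SE_ge_interval j - \<rat>) - emeasure lebesgue (SE_ge_interval M - \<rat>)"
    using SE_ge_interval_antimono[OF j1 M(2)] emeasure_SE_ge_interval[OF M(1)]
    by (intro emeasure_Diff) (auto intro: sets_lebesgue_Diff_Rats simp: emeasure_Diff_Rats)
  also have "\<dots> = ennreal (1 / (2 * real j - 1) - 1 / (2 * real M - 1))"
    using M(1)
    by (simp add: emeasure_Diff_Rats emeasure_SE_ge_interval[OF j1] emeasure_SE_ge_interval[OF M(1)] ennreal_minus)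
  also have "\<dots> \<le> ennreal (1 - 1 / (3 * T)) * emeasure lebesgue (SE_ge_interval j)"
    using ineq j1 by (simp add: T_def emeasure_SE_ge_interval[OF j1] ennreal_mult[symmetric] ennreal_leI)
  finally show ?thesis unfolding eq T_def .
qed

section \<open>Events defined by the ratios of consecutive digits\<close>

(* The digits of x preceded by p: the first ratio compares d\<^sub>1(x) with the digit p read before
   reaching x, which lets ratio events be unfolded one application of T at a time. *)
definition SE_digits_from :: "int \<Rightarrow> real \<Rightarrow> nat \<Rightarrow> int" where
  "SE_digits_from p x i = (if i = 0 then p else SE_d i x)"

definition SE_ratio_event :: "(nat \<Rightarrow> real \<Rightarrow> bool) \<Rightarrow> nat \<Rightarrow> int \<Rightarrow> real set" where
  "SE_ratio_event P L p = {x \<in> {0<..<1} - \<rat>. \<forall>i<L.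
     P i (of_int (SE_digits_from p x (Suc i)) / of_int (SE_digits_from p x i))}"

lemma SE_digits_from_T: "SE_digits_from (SE_d1 y) (SE_T y) i = SE_digits_from p y (Suc i)"
  by (cases i) (simp_all add: SE_digits_from_def SE_d_def funpow_swap1)

lemma SE_digits_from_ratio:
  "1 \<le> i \<Longrightarrow> of_int (SE_digits_from p x (Suc i)) / of_int (SE_digits_from p x i) = SE_R (Suc i) x"
  by (simp add: SE_digits_from_def SE_R_def)

lemma SE_ratio_event_Suc:
  assumes "y \<in> {0<..<1} - \<rat>"
  shows "y \<in> SE_ratio_event P (Suc L) p \<longleftrightarrow>
    P 0 (of_int (SE_d1 y) / of_int p) \<and> SE_T y \<in> SE_ratio_event (\<lambda>i. P (Suc i)) L (SE_d1 y)"
proof -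
  have "SE_digits_from p y (Suc 0) = SE_d1 y" "SE_digits_from p y 0 = p"
    by (simp_all add: SE_digits_from_def SE_d_def)
  then show ?thesis
    using assms SE_T_irrational[OF assms]
    by (simp add: SE_ratio_event_def All_less_Suc2 SE_digits_from_T[of y _ p])
qed

lemma SE_ratio_event_eq:
  assumes "\<And>r. P 0 r"
  shows "SE_ratio_event P L p = {x \<in> {0<..<1} - \<rat>. \<forall>i\<in>{1..<L}. P i (SE_R (Suc i) x)}"
proof -
  have "(\<forall>i<L. P i (of_int (SE_digits_from p x (Suc i)) / of_int (SE_digits_from p x i)))
      \<longleftrightarrow> (\<forall>i\<in>{1..<L}. P i (SE_R (Suc i) x))" for x
    using assms SE_digits_from_ratio[of _ p x] by (metis atLeastLessThan_iff less_one not_le)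
  then show ?thesis by (simp add: SE_ratio_event_def)
qed

lemma SE_density_le_ratio_event_0: "SE_density_le (SE_ratio_event P 0) 1"
proof -
  have "SE_ratio_event P 0 p = {0<..<1} - \<rat>" for p by (auto simp: SE_ratio_event_def)
  moreover have "({0<..<1} - \<rat>) \<inter> SE_ge_interval j = SE_ge_interval j - \<rat>" if "1 \<le> j" for j
    using SE_ge_interval_subset[OF that] by blast
  ultimately show ?thesis
    by (auto simp: SE_density_le_def emeasure_Diff_Rats intro: sets_lebesgue_Diff_Rats)
qed

lemma SE_density_le_ratio_event_Suc:
  fixes \<rho> f\<^sub>0 :: ennreal
  assumes B: "SE_density_le (SE_ratio_event (\<lambda>i. P (Suc i)) L) \<rho>"
    and step: "\<And>k j. 1 \<le> k \<Longrightarrow> j \<in> {k, Suc k} \<Longrightarrow>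
      emeasure lebesgue {y \<in> SE_ge_interval j - \<rat>. P 0 (of_int (SE_d1 y) / (2 * real k))}
        \<le> f\<^sub>0 * emeasure lebesgue (SE_ge_interval j)"
  shows "SE_density_le (SE_ratio_event P (Suc L)) (\<rho> * f\<^sub>0)"
proof -
  let ?E = "SE_ratio_event P (Suc L)" and ?B = "SE_ratio_event (\<lambda>i. P (Suc i)) L"
  define C where "C k j q \<longleftrightarrow> P 0 (of_int q / (2 * real k)) \<and> 2 * int j \<le> q" for k j q
  note pullback = emeasure_SE_pullback_le[OF B]
  have eq: "?E (2 * int k) \<inter> SE_ge_interval j
      = {y \<in> {0<..<1} - \<rat>. C k j (SE_d1 y) \<and> SE_T y \<in> ?B (SE_d1 y)}" if "1 \<le> j" for k j
    using SE_ratio_event_Suc[of _ P L "2 * int k"] SE_ge_interval_eq[OF that]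
    by (auto simp: C_def SE_ratio_event_def)
  have C_eq: "{y \<in> {0<..<1} - \<rat>. C k j (SE_d1 y)}
      = {y \<in> SE_ge_interval j - \<rat>. P 0 (of_int (SE_d1 y) / (2 * real k))}" if "1 \<le> j" for k j
    using SE_ge_interval_eq[OF that] by (auto simp: C_def)
  have "?E (2 * int k) = ?E (2 * int k) \<inter> SE_ge_interval 1" for k
    unfolding SE_ge_interval_1 by (auto simp: SE_ratio_event_def)
  then have sets: "?E (2 * int k) \<in> sets lebesgue" for k
    using eq[of 1 k] pullback(1) by simp
  have le: "emeasure lebesgue (?E (2 * int k) \<inter> SE_ge_interval j) \<le> \<rho> * f\<^sub>0 * emeasure lebesgue (SE_ge_interval j)"
    if "1 \<le> k" "j \<in> {k, Suc k}" for k j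
  proof -
    have j1: "1 \<le> j" using that by auto
    have "emeasure lebesgue (?E (2 * int k) \<inter> SE_ge_interval j)
        \<le> \<rho> * emeasure lebesgue {y \<in> SE_ge_interval j - \<rat>. P 0 (of_int (SE_d1 y) / (2 * real k))}"
      unfolding eq[OF j1] C_eq[OF j1, symmetric] by (rule pullback(3))
    also have "\<dots> \<le> \<rho> * (f\<^sub>0 * emeasure lebesgue (SE_ge_interval j))"
      using step[OF that] by (rule mult_left_mono) simp
    finally show ?thesis by (simp only: mult.assoc)
  qed
  show ?thesis unfolding SE_density_le_def using sets le by blast
qed

lemma SE_density_le_ratio_event:
  fixes f :: "nat \<Rightarrow> ennreal"
  assumes "\<And>i k j. 1 \<le> k \<Longrightarrow> j \<in> {k, Suc k} \<Longrightarrow>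
      emeasure lebesgue {y \<in> SE_ge_interval j - \<rat>. P i (of_int (SE_d1 y) / (2 * real k))}
        \<le> f i * emeasure lebesgue (SE_ge_interval j)"
  shows "SE_density_le (SE_ratio_event P L) (\<Prod>i<L. f i)"
  using assms
proof (induction L arbitrary: P f)
  case 0
  show ?case using SE_density_le_ratio_event_0 by simp
next
  case (Suc L)
  have "SE_density_le (SE_ratio_event (\<lambda>i. P (Suc i)) L) (\<Prod>i<L. f (Suc i))"
    by (rule Suc.IH, rule Suc.prems)
  then have "SE_density_le (SE_ratio_event P (Suc L)) ((\<Prod>i<L. f (Suc i)) * f 0)"
    using Suc.prems by (rule SE_density_le_ratio_event_Suc[where P=P])
  then show ?case unfolding prod.lessThan_Suc_shift mult.commute[of "f 0"] .
qed

lemma emeasure_SE_ratio_event_le: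
  fixes f :: "nat \<Rightarrow> ennreal"
  assumes "\<And>i k j. 1 \<le> k \<Longrightarrow> j \<in> {k, Suc k} \<Longrightarrow>
      emeasure lebesgue {y \<in> SE_ge_interval j - \<rat>. P i (of_int (SE_d1 y) / (2 * real k))}
        \<le> f i * emeasure lebesgue (SE_ge_interval j)"
  shows "SE_ratio_event P L 2 \<in> sets lebesgue" "emeasure lebesgue (SE_ratio_event P L 2) \<le> (\<Prod>i<L. f i)"
proof -
  have "SE_density_le (SE_ratio_event P L) (\<Prod>i<L. f i)"
    by (rule SE_density_le_ratio_event) (rule assms)
  then have "SE_ratio_event P L (2 * int 1) \<in> sets lebesgue"
    and le: "emeasure lebesgue (SE_ratio_event P L (2 * int 1) \<inter> SE_ge_interval 1)
      \<le> (\<Prod>i<L. f i) * emeasure lebesgue (SE_ge_interval 1)"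
    unfolding SE_density_le_def by blast+
  moreover have "SE_ratio_event P L 2 \<inter> SE_ge_interval 1 = SE_ratio_event P L 2"
    unfolding SE_ge_interval_1 by (auto simp: SE_ratio_event_def)
  moreover have "emeasure lebesgue (SE_ge_interval 1) = 1" unfolding SE_ge_interval_1 by simp
  ultimately show "SE_ratio_event P L 2 \<in> sets lebesgue" "emeasure lebesgue (SE_ratio_event P L 2) \<le> (\<Prod>i<L. f i)"
    by (metis mult_1_right of_nat_1 mult.right_neutral)+
qed

lemma emeasure_SE_R_ge_le:
  assumes n: "1 \<le> n" and t: "0 < t"
  shows "{x \<in> {0<..<1} - \<rat>. t \<le> SE_R (Suc n) x} \<in> sets lebesgue"
    and "emeasure lebesgue {x \<in> {0<..<1} - \<rat>. t \<le> SE_R (Suc n) x} \<le> ennreal (3 / t)"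
proof -
  define P where "P i r \<longleftrightarrow> (i = n \<longrightarrow> t \<le> r)" for i r
  have eq: "{x \<in> {0<..<1} - \<rat>. t \<le> SE_R (Suc n) x} = SE_ratio_event P (Suc n) 2"
    by (subst SE_ratio_event_eq) (use n in \<open>auto simp: P_def\<close>)
  have step: "emeasure lebesgue {y \<in> SE_ge_interval j - \<rat>. P i (of_int (SE_d1 y) / (2 * real k))}
      \<le> (if i = n then ennreal (3 / t) else 1) * emeasure lebesgue (SE_ge_interval j)"
    if "1 \<le> k" "j \<in> {k, Suc k}" for i k j
  proof (cases "i = n")
    case True
    then show ?thesis using emeasure_SE_ratio_ge_le[OF that t] by (simp add: P_def)
  next
    case False
    then have "{y \<in> SE_ge_interval j - \<rat>. P i (of_int (SE_d1 y) / (2 * real k))} = SE_ge_interval j - \<rat>"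
      by (auto simp: P_def)
    then show ?thesis using False by (simp add: emeasure_Diff_Rats)
  qed
  note E = emeasure_SE_ratio_event_le[where P=P and L="Suc n", OF step]
  show "{x \<in> {0<..<1} - \<rat>. t \<le> SE_R (Suc n) x} \<in> sets lebesgue"
    and "emeasure lebesgue {x \<in> {0<..<1} - \<rat>. t \<le> SE_R (Suc n) x} \<le> ennreal (3 / t)"
    using E unfolding eq by simp_all
qed

lemma emeasure_SE_R_less_le:
  fixes \<phi> :: "nat \<Rightarrow> real" and r L :: nat
  assumes pos: "\<And>n. 1 \<le> n \<Longrightarrow> 0 < \<phi> n" and r: "1 \<le> r"
  defines "E \<equiv> {x \<in> {0<..<1} - \<rat>. \<forall>i\<in>{r..<L}. SE_R (Suc i) x < \<phi> (Suc i)}"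
  shows "E \<in> sets lebesgue" "emeasure lebesgue E \<le> ennreal (\<Prod>i\<in>{r..<L}. 1 - 1 / (3 * max 1 (\<phi> (Suc i))))"
proof -
  define P where "P i \<rho> \<longleftrightarrow> (r \<le> i \<longrightarrow> \<rho> < \<phi> (Suc i))" for i \<rho>
  define f where "f i = (if r \<le> i then ennreal (1 - 1 / (3 * max 1 (\<phi> (Suc i)))) else 1)" for i
  have eq: "E = SE_ratio_event P L 2"
    by (subst SE_ratio_event_eq) (use r in \<open>auto simp: E_def P_def\<close>)
  have step: "emeasure lebesgue {y \<in> SE_ge_interval j - \<rat>. P i (of_int (SE_d1 y) / (2 * real k))}
      \<le> f i * emeasure lebesgue (SE_ge_interval j)"
    if "1 \<le> k" "j \<in> {k, Suc k}" for i k j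
  proof (cases "r \<le> i")
    case True
    then show ?thesis using emeasure_SE_ratio_less_le[OF that pos[of "Suc i"]] by (simp add: P_def f_def)
  next
    case False
    then have "{y \<in> SE_ge_interval j - \<rat>. P i (of_int (SE_d1 y) / (2 * real k))} = SE_ge_interval j - \<rat>"
      by (auto simp: P_def)
    then show ?thesis using False by (simp add: f_def emeasure_Diff_Rats)
  qed
  have "(\<Prod>i<L. f i) = (\<Prod>i\<in>{r..<L}. ennreal (1 - 1 / (3 * max 1 (\<phi> (Suc i)))))"
  proof -
    have "{i \<in> {..<L}. r \<le> i} = {r..<L}" by auto
    then show ?thesis unfolding f_def by (simp add: prod.inter_filter[symmetric])
  qed
  also have "\<dots> = ennreal (\<Prod>i\<in>{r..<L}. 1 - 1 / (3 * max 1 (\<phi> (Suc i))))"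
    by (intro prod_ennreal) (simp add: field_simps max_def)
  finally have prod_eq: "(\<Prod>i<L. f i) = ennreal (\<Prod>i\<in>{r..<L}. 1 - 1 / (3 * max 1 (\<phi> (Suc i))))" .
  show "E \<in> sets lebesgue" "emeasure lebesgue E \<le> ennreal (\<Prod>i\<in>{r..<L}. 1 - 1 / (3 * max 1 (\<phi> (Suc i))))"
    using emeasure_SE_ratio_event_le[where P=P and L=L, OF step] unfolding eq prod_eq by simp_all
qed

section \<open>The two halves of the dichotomy\<close>

lemma null_sets_frequently_SE_R_ge:
  fixes \<phi> :: "nat \<Rightarrow> real"
  assumes pos: "\<And>n. 1 \<le> n \<Longrightarrow> 0 < \<phi> n" and summable: "summable (\<lambda>n. 1 / \<phi> (n + 1))"
  shows "{x \<in> {0<..<1} - \<rat>. \<exists>\<^sub>F n in sequentially. \<phi> n \<le> SE_R n x} \<in> null_sets lebesgue"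
proof -
  define A where "A n = {x \<in> {0<..<1} - \<rat>. \<phi> (Suc (Suc n)) \<le> SE_R (Suc (Suc n)) x}" for n
  have A_sets: "A n \<in> sets lebesgue" and A_le: "emeasure lebesgue (A n) \<le> ennreal (3 / \<phi> (Suc (Suc n)))" for n
    unfolding A_def using emeasure_SE_R_ge_le[of "Suc n" "\<phi> (Suc (Suc n))"] pos[of "Suc (Suc n)"] by simp_all
  have A_fin: "emeasure lebesgue (A n) < \<infinity>" for n
    using A_le[of n] by (rule le_less_trans) simp
  have "norm (measure lebesgue (A n)) \<le> 3 / \<phi> (Suc (Suc n))" for n
  proof -
    have "0 \<le> 3 / \<phi> (Suc (Suc n))" using pos[of "Suc (Suc n)"] by simp
    then show ?thesis unfolding measure_def using A_le[of n] by (simp add: enn2real_leI)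
  qed
  moreover have "summable (\<lambda>n. 3 / \<phi> (Suc (Suc n)))"
    using summable_mult[OF summable[THEN summable_Suc_iff[THEN iffD2]], of 3] by simp
  ultimately have "summable (\<lambda>n. measure lebesgue (A n))"
    by (metis summable_comparison_test')
  then have null: "limsup A \<in> null_sets lebesgue" by (rule borel_cantelli_limsup1[OF A_sets A_fin])
  have "{x \<in> {0<..<1} - \<rat>. \<exists>\<^sub>F n in sequentially. \<phi> n \<le> SE_R n x} \<subseteq> limsup A"
  proof
    fix x assume "x \<in> {x \<in> {0<..<1} - \<rat>. \<exists>\<^sub>F n in sequentially. \<phi> n \<le> SE_R n x}"
    then have x: "x \<in> {0<..<1} - \<rat>" and fr: "\<exists>\<^sub>F n in sequentially. \<phi> n \<le> SE_R n x" by auto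
    from fr have "\<exists>\<^sub>F n in sequentially. \<phi> (n + 2) \<le> SE_R (n + 2) x"
      unfolding frequently_def by (subst eventually_sequentially_seg)
    then have "\<exists>\<^sub>F n in sequentially. x \<in> A n" using x by (simp add: A_def)
    then show "x \<in> limsup A" by (auto simp: limsup_INF_SUP frequently_sequentially)
  qed
  then show ?thesis using null by (rule null_sets_completion_subset)
qed

lemma null_sets_SE_R_less_from:
  fixes \<phi> :: "nat \<Rightarrow> real"
  assumes pos: "\<And>n. 1 \<le> n \<Longrightarrow> 0 < \<phi> n" and diverges: "\<not> summable (\<lambda>n. 1 / \<phi> (n + 1))"
    and r: "1 \<le> r"
  shows "{x \<in> {0<..<1} - \<rat>. \<forall>i\<ge>r. SE_R (Suc i) x < \<phi> (Suc i)} \<in> null_sets lebesgue"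
proof -
  define E where "E L = {x \<in> {0<..<1} - \<rat>. \<forall>i\<in>{r..<L}. SE_R (Suc i) x < \<phi> (Suc i)}" for L
  define a where "a i = 1 / (3 * max 1 (\<phi> (Suc i)))" for i
  have a0: "0 \<le> a i" and a1: "a i \<le> 1" for i by (auto simp: a_def divide_simps)
  have "\<not> summable (\<lambda>i. 1 / max 1 (\<phi> (Suc i)))"
    using not_summable_inverse_max_1[of "\<lambda>i. \<phi> (Suc i)"] diverges by simp
  moreover have a_eq: "a = (\<lambda>i. 1 / 3 * (1 / max 1 (\<phi> (Suc i))))" by (simp add: a_def fun_eq_iff)
  ultimately have "\<not> summable a" unfolding a_eq summable_cmult_iff by simp
  have E_sets: "E L \<in> sets lebesgue" for L
    unfolding E_def by (rule emeasure_SE_R_less_le(1)[OF pos r])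
  have E_le: "emeasure lebesgue (E L) \<le> ennreal (\<Prod>i\<in>{r..<L}. 1 - a i)" for L
    unfolding E_def a_def by (rule emeasure_SE_R_less_le(2)[OF pos r])
  have eq: "{x \<in> {0<..<1} - \<rat>. \<forall>i\<ge>r. SE_R (Suc i) x < \<phi> (Suc i)} = (\<Inter>L. E L)"
    by (auto simp: E_def) (metis atLeastLessThan_iff lessI)
  have "emeasure lebesgue (\<Inter>L. E L) \<le> 0"
  proof (rule ennreal_le_epsilon)
    fix e :: real assume "0 < e"
    then obtain L where "(\<Prod>i\<in>{r..<L}. 1 - a i) < e"
      using prod_one_minus_less[OF a0 a1 \<open>\<not> summable a\<close>] by blast
    then have "ennreal (\<Prod>i\<in>{r..<L}. 1 - a i) \<le> ennreal e" by (intro ennreal_leI) simp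
    moreover have "emeasure lebesgue (\<Inter>L. E L) \<le> emeasure lebesgue (E L)"
      using E_sets by (intro emeasure_mono) auto
    ultimately show "emeasure lebesgue (\<Inter>L. E L) \<le> 0 + ennreal e"
      using E_le[of L] by simp
  qed
  then have "emeasure lebesgue (\<Inter>L. E L) = 0" by (simp only: le_zero_eq)
  moreover have "(\<Inter>L. E L) \<in> sets lebesgue" using E_sets by blast
  ultimately show ?thesis unfolding eq by (rule null_setsI)
qed

lemma null_sets_eventually_SE_R_less:
  fixes \<phi> :: "nat \<Rightarrow> real"
  assumes pos: "\<And>n. 1 \<le> n \<Longrightarrow> 0 < \<phi> n" and diverges: "\<not> summable (\<lambda>n. 1 / \<phi> (n + 1))"
  shows "{x \<in> {0<..<1} - \<rat>. \<forall>\<^sub>F n in sequentially. SE_R n x < \<phi> n} \<in> null_sets lebesgue"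
proof -
  let ?N = "\<lambda>r. {x \<in> {0<..<1} - \<rat>. \<forall>i\<ge>Suc r. SE_R (Suc i) x < \<phi> (Suc i)}"
  have "{x \<in> {0<..<1} - \<rat>. \<forall>\<^sub>F n in sequentially. SE_R n x < \<phi> n} \<subseteq> (\<Union>r. ?N r)"
  proof
    fix x assume "x \<in> {x \<in> {0<..<1} - \<rat>. \<forall>\<^sub>F n in sequentially. SE_R n x < \<phi> n}"
    then have x: "x \<in> {0<..<1} - \<rat>" and "\<forall>\<^sub>F n in sequentially. SE_R n x < \<phi> n" by auto
    then obtain r where "\<And>n. r \<le> n \<Longrightarrow> SE_R n x < \<phi> n" unfolding eventually_sequentially by blast
    with x have "x \<in> ?N r" by simp
    then show "x \<in> (\<Union>r. ?N r)" by blast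
  qed
  moreover have "(\<Union>r. ?N r) \<in> null_sets lebesgue"
    by (intro null_sets_UN null_sets_SE_R_less_from[OF pos diverges]) simp_all
  ultimately show ?thesis by (rule null_sets_completion_subset)
qed

lemma SE_R_le_SE_M: "1 \<le> k \<Longrightarrow> k \<le> n \<Longrightarrow> SE_R k x \<le> SE_M n x"
  unfolding SE_M_def by (intro Max_ge) auto

lemma M_set_eq: "M_set \<phi> = {x \<in> {0<..<1} - \<rat>. \<exists>\<^sub>F n in sequentially. 1 \<le> n \<and> \<phi> n \<le> SE_M n x}"
  unfolding M_set_def cofinite_eq_sequentially[symmetric] frequently_cofinite by simp

lemma M_set_subset_frequently_SE_R_ge:
  assumes mono: "\<And>m n. 1 \<le> m \<Longrightarrow> m \<le> n \<Longrightarrow> \<phi> m \<le> \<phi> n"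
    and lim: "filterlim \<phi> at_top sequentially"
  shows "M_set \<phi> \<subseteq> {x \<in> {0<..<1} - \<rat>. \<exists>\<^sub>F n in sequentially. \<phi> n \<le> SE_R n x}"
proof
  fix x assume "x \<in> M_set \<phi>"
  then have x: "x \<in> {0<..<1} - \<rat>" and inf: "infinite {n. 1 \<le> n \<and> \<phi> n \<le> SE_M n x}"
    by (auto simp: M_set_def)
  have "\<exists>\<^sub>F n in sequentially. \<phi> n \<le> SE_R n x"
  proof (rule ccontr)
    assume "\<not> ?thesis"
    then have "\<forall>\<^sub>F n in sequentially. SE_R n x < \<phi> n" by (simp add: not_frequently not_le)
    then have "finite {n. 1 \<le> n \<and> \<phi> n \<le> SE_M n x}"
      using finite_running_max_exceedances[OF mono lim, of "\<lambda>k. SE_R k x"] by (simp add: SE_M_def)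
    with inf show False by contradiction
  qed
  with x show "x \<in> {x \<in> {0<..<1} - \<rat>. \<exists>\<^sub>F n in sequentially. \<phi> n \<le> SE_R n x}" by simp
qed

lemma frequently_SE_R_ge_subset_M_set:
  "{x \<in> {0<..<1} - \<rat>. \<exists>\<^sub>F n in sequentially. \<phi> n \<le> SE_R n x} \<subseteq> M_set \<phi>"
proof
  fix x assume "x \<in> {x \<in> {0<..<1} - \<rat>. \<exists>\<^sub>F n in sequentially. \<phi> n \<le> SE_R n x}"
  then have x: "x \<in> {0<..<1} - \<rat>" and fr: "\<exists>\<^sub>F n in sequentially. \<phi> n \<le> SE_R n x" by auto
  have "\<phi> n \<le> SE_R n x \<longrightarrow> 1 \<le> n \<and> \<phi> n \<le> SE_M n x" if "1 \<le> n" for n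
    using that SE_R_le_SE_M[of n n x] by auto
  then have "\<forall>\<^sub>F n in sequentially. \<phi> n \<le> SE_R n x \<longrightarrow> 1 \<le> n \<and> \<phi> n \<le> SE_M n x"
    by (rule eventually_mono[OF eventually_ge_at_top[of 1]])
  then have "\<exists>\<^sub>F n in sequentially. 1 \<le> n \<and> \<phi> n \<le> SE_M n x" using fr by (rule frequently_mp)
  with x show "x \<in> M_set \<phi>" by (simp add: M_set_eq)
qed

lemma null_sets_M_set:
  fixes \<phi> :: "nat \<Rightarrow> real"
  assumes pos: "\<And>n. 1 \<le> n \<Longrightarrow> 0 < \<phi> n"
    and mono: "\<And>m n. 1 \<le> m \<Longrightarrow> m \<le> n \<Longrightarrow> \<phi> m \<le> \<phi> n"
    and summable: "summable (\<lambda>n. 1 / \<phi> (n + 1))"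
  shows "M_set \<phi> \<in> null_sets lebesgue"
proof -
  have "filterlim (\<lambda>n. \<phi> (Suc n)) at_top sequentially"
    using pos summable by (intro filterlim_at_top_if_summable_inverse) simp_all
  then have "filterlim \<phi> at_top sequentially" by (rule filterlim_sequentially_Suc[THEN iffD1])
  with mono have "M_set \<phi> \<subseteq> {x \<in> {0<..<1} - \<rat>. \<exists>\<^sub>F n in sequentially. \<phi> n \<le> SE_R n x}"
    by (rule M_set_subset_frequently_SE_R_ge)
  then show ?thesis using null_sets_frequently_SE_R_ge[OF pos summable] by (rule null_sets_completion_subset)
qed

lemma null_sets_Diff_M_set:
  fixes \<phi> :: "nat \<Rightarrow> real"
  assumes pos: "\<And>n. 1 \<le> n \<Longrightarrow> 0 < \<phi> n" and diverges: "\<not> summable (\<lambda>n. 1 / \<phi> (n + 1))"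
  shows "({0<..<1} - \<rat>) - M_set \<phi> \<in> null_sets lebesgue"
proof -
  have "({0<..<1} - \<rat>) - M_set \<phi> \<subseteq> {x \<in> {0<..<1} - \<rat>. \<forall>\<^sub>F n in sequentially. SE_R n x < \<phi> n}"
  proof
    fix x assume x: "x \<in> ({0<..<1} - \<rat>) - M_set \<phi>"
    then have "\<not> (\<exists>\<^sub>F n in sequentially. \<phi> n \<le> SE_R n x)"
      using frequently_SE_R_ge_subset_M_set[of \<phi>] by blast
    with x show "x \<in> {x \<in> {0<..<1} - \<rat>. \<forall>\<^sub>F n in sequentially. SE_R n x < \<phi> n}"
      by (simp add: not_frequently not_le)
  qed
  then show ?thesis using null_sets_eventually_SE_R_less[OF pos diverges] by (rule null_sets_completion_subset)
qed

theorem corollary1p5: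
  fixes \<phi> :: "nat \<Rightarrow> real"
  assumes pos: "\<And>n. n \<ge> 1 \<Longrightarrow> \<phi> n > 0"
    and mono: "\<And>m n. 1 \<le> m \<Longrightarrow> m \<le> n \<Longrightarrow> \<phi> m \<le> \<phi> n"
  shows "(\<not> summable (\<lambda>n. 1 / \<phi> (n + 1)) \<longrightarrow>
            M_set \<phi> \<in> sets lebesgue \<and> emeasure lebesgue (M_set \<phi>) = 1)
       \<and> (summable (\<lambda>n. 1 / \<phi> (n + 1)) \<longrightarrow>
            M_set \<phi> \<in> sets lebesgue \<and> emeasure lebesgue (M_set \<phi>) = 0)"
proof (intro conjI impI)
  let ?I = "{0<..<1::real} - \<rat>"
  assume diverges: "\<not> summable (\<lambda>n. 1 / \<phi> (n + 1))"
  have null: "?I - M_set \<phi> \<in> null_sets lebesgue" using null_sets_Diff_M_set[OF pos diverges] .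
  have I: "?I \<in> sets lebesgue" by (intro sets_lebesgue_Diff_Rats) simp
  have M_eq: "M_set \<phi> = ?I - (?I - M_set \<phi>)" by (auto simp: M_set_def)
  show "M_set \<phi> \<in> sets lebesgue" using I null by (subst M_eq) auto
  have "emeasure lebesgue (M_set \<phi>) = emeasure lebesgue ?I"
    by (subst M_eq) (rule emeasure_Diff_null_set[OF null I])
  then show "emeasure lebesgue (M_set \<phi>) = 1" by (simp add: emeasure_Diff_Rats)
next
  assume "summable (\<lambda>n. 1 / \<phi> (n + 1))"
  with pos mono have "M_set \<phi> \<in> null_sets lebesgue" by (rule null_sets_M_set)
  then show "M_set \<phi> \<in> sets lebesgue" "emeasure lebesgue (M_set \<phi>) = 0" by auto
qed

end
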